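(* For every $n\ge1$, the set of transitive integer relations on $[n]$, ordered by the weak order on integer relations, is a lattice (though not a sublattice of the weak order on all integer relations), and the set of integer posets on $[n]$ (antisymmetric transitive integer relations) is a sublattice of this lattice of transitive integer relations.
   Context: An integer relation of size $n$ is a reflexive binary relation $R$ on $[n]=\{1,\dots,n\}$. Its increasing part is $\mathrm{Inc}(R)=\{(a,b)\in R: a<b\}$ and its decreasing part is $\mathrm{Dec}(R)=\{(b,a)\in R: a<b\}$. The weak order on integer relations: $R\le S$ iff $\mathrm{Inc}(S)\subseteq\mathrm{Inc}(R)$ and $\mathrm{Dec}(R)\subseteq\mathrm{Dec}(S)$. An integer poset is an integer relation that is antisymmetric and transitive. *)

theory Defs
  imports Main
begin

definition int_rel :: "nat \<Rightarrow> (nat \<times> nat) set \<Rightarrow> bool" where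
  "int_rel n R \<longleftrightarrow> R \<subseteq> {1..n} \<times> {1..n} \<and> (\<forall>i\<in>{1..n}. (i, i) \<in> R)"

definition Inc :: "(nat \<times> nat) set \<Rightarrow> (nat \<times> nat) set" where
  "Inc R = {(a, b). (a, b) \<in> R \<and> a < b}"

definition Dec :: "(nat \<times> nat) set \<Rightarrow> (nat \<times> nat) set" where
  "Dec R = {(b, a). (b, a) \<in> R \<and> a < b}"

definition weak_le :: "(nat \<times> nat) set \<Rightarrow> (nat \<times> nat) set \<Rightarrow> bool" where
  "weak_le R S \<longleftrightarrow> Inc S \<subseteq> Inc R \<and> Dec R \<subseteq> Dec S"

definition int_rels :: "nat \<Rightarrow> (nat \<times> nat) set set" where
  "int_rels n = {R. int_rel n R}"

definition trans_int_rels :: "nat \<Rightarrow> (nat \<times> nat) set set" where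
  "trans_int_rels n = {R. int_rel n R \<and> trans R}"

definition int_posets :: "nat \<Rightarrow> (nat \<times> nat) set set" where
  "int_posets n = {R. int_rel n R \<and> antisym R \<and> trans R}"

definition is_weak_glb :: "(nat \<times> nat) set set \<Rightarrow> (nat \<times> nat) set \<Rightarrow> (nat \<times> nat) set \<Rightarrow> (nat \<times> nat) set \<Rightarrow> bool" where
  "is_weak_glb A R S M \<longleftrightarrow> M \<in> A \<and> weak_le M R \<and> weak_le M S \<and>
     (\<forall>X\<in>A. weak_le X R \<and> weak_le X S \<longrightarrow> weak_le X M)"

definition is_weak_lub :: "(nat \<times> nat) set set \<Rightarrow> (nat \<times> nat) set \<Rightarrow> (nat \<times> nat) set \<Rightarrow> (nat \<times> nat) set \<Rightarrow> bool" where
  "is_weak_lub A R S J \<longleftrightarrow> J \<in> A \<and> weak_le R J \<and> weak_le S J \<and>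
     (\<forall>X\<in>A. weak_le R X \<and> weak_le S X \<longrightarrow> weak_le J X)"

definition weak_lattice :: "(nat \<times> nat) set set \<Rightarrow> bool" where
  "weak_lattice A \<longleftrightarrow> (\<forall>R\<in>A. \<forall>S\<in>A. (\<exists>M. is_weak_glb A R S M) \<and> (\<exists>J. is_weak_lub A R S J))"

definition weak_sublattice :: "(nat \<times> nat) set set \<Rightarrow> (nat \<times> nat) set set \<Rightarrow> bool" where
  "weak_sublattice B A \<longleftrightarrow> B \<subseteq> A \<and>
     (\<forall>R\<in>B. \<forall>S\<in>B. (\<forall>M. is_weak_glb A R S M \<longrightarrow> M \<in> B) \<and> (\<forall>J. is_weak_lub A R S J \<longrightarrow> J \<in> B))"

end

theory Submission
  imports Defs
begin

text \<open>
  The join of two transitive integer relations R and S is built explicitly. Its decreasing part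
  is forced to contain the transitive closure D of Dec R \<union> Dec S, and this suffices. An
  increasing pair (a, c) may be kept only if every increasing pair (x, z) that transitivity
  through D would then create (x D* a, c D* z) already lies in R \<inter> S; keeping exactly these
  pairs gives a transitive relation, and it lies below every transitive upper bound. Meets follow
  by duality, since taking converses reverses the weak order. A cycle in the join of two posets
  would end with a D-step (p, x) whose reverse (x, p) lies in R \<inter> S, contradicting antisymmetry,
  so posets are closed under both operations.
\<close>

lemma mem_Inc_iff [simp]: "(a, b) \<in> Inc R \<longleftrightarrow> (a, b) \<in> R \<and> a < b"
  by (auto simp: Inc_def)

lemma mem_Dec_iff [simp]: "(b, a) \<in> Dec R \<longleftrightarrow> (b, a) \<in> R \<and> a < b"
  by (auto simp: Dec_def)

definition dec_union :: "(nat \<times> nat) set \<Rightarrow> (nat \<times> nat) set \<Rightarrow> (nat \<times> nat) set" where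
  "dec_union R S = Dec R \<union> Dec S"

definition join_inc :: "(nat \<times> nat) set \<Rightarrow> (nat \<times> nat) set \<Rightarrow> nat \<Rightarrow> nat \<Rightarrow> bool" where
  "join_inc R S a c \<longleftrightarrow> a < c \<and>
     (\<forall>x z. (x, a) \<in> (dec_union R S)\<^sup>* \<longrightarrow> (c, z) \<in> (dec_union R S)\<^sup>* \<longrightarrow> x < z
        \<longrightarrow> (x, z) \<in> R \<and> (x, z) \<in> S)"

definition weak_join :: "nat \<Rightarrow> (nat \<times> nat) set \<Rightarrow> (nat \<times> nat) set \<Rightarrow> (nat \<times> nat) set" where
  "weak_join n R S = Id_on {1..n} \<union> (dec_union R S)\<^sup>+ \<union> {(a, c). join_inc R S a c}"

lemma dec_union_less: "(p, q) \<in> dec_union R S \<Longrightarrow> q < p"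
  by (auto simp: dec_union_def)

lemma trancl_dec_union_less: "(p, q) \<in> (dec_union R S)\<^sup>+ \<Longrightarrow> q < p"
  by (induction rule: trancl_induct) (auto dest: dec_union_less)

lemma join_inc_less: "join_inc R S a c \<Longrightarrow> a < c"
  by (simp add: join_inc_def)

lemma join_incD:
  "join_inc R S a c \<Longrightarrow> (x, a) \<in> (dec_union R S)\<^sup>* \<Longrightarrow> (c, z) \<in> (dec_union R S)\<^sup>* \<Longrightarrow> x < z
    \<Longrightarrow> (x, z) \<in> R \<and> (x, z) \<in> S"
  unfolding join_inc_def by blast

lemma join_inc_mem: "join_inc R S a c \<Longrightarrow> (a, c) \<in> R \<and> (a, c) \<in> S"
  using join_incD join_inc_less by blast

lemma join_inc_rtrancl_left:
  "join_inc R S y z \<Longrightarrow> (x, y) \<in> (dec_union R S)\<^sup>* \<Longrightarrow> x < z \<Longrightarrow> join_inc R S x z"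
  unfolding join_inc_def by (meson rtrancl_trans)

lemma join_inc_rtrancl_right:
  "join_inc R S x y \<Longrightarrow> (y, z) \<in> (dec_union R S)\<^sup>* \<Longrightarrow> x < z \<Longrightarrow> join_inc R S x z"
  unfolding join_inc_def by (meson rtrancl_trans)

context
  fixes R S :: "(nat \<times> nat) set"
  assumes trans_R: "trans R" and trans_S: "trans S"
begin

text \<open>
  Walking down a D-path that crosses the target, the step (p, q) jumping over it combines by
  transitivity with the pair (q, target) or (target, p) guaranteed by join_inc, giving a single
  decreasing step into the target.
\<close>

lemma join_inc_absorb_left:
  assumes inc: "join_inc R S a b" and path: "(x, a) \<in> (dec_union R S)\<^sup>*" and "b \<le> x"
  shows "(x, b) \<in> (dec_union R S)\<^sup>*"
  using path \<open>b \<le> x\<close>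
proof (induction rule: converse_rtrancl_induct)
  case base
  then show ?case using join_inc_less[OF inc] by simp
next
  case (step x p)
  show ?case
  proof (cases "b \<le> p")
    case True
    then show ?thesis using step by (meson converse_rtrancl_into_rtrancl)
  next
    case False
    then have "(p, b) \<in> R" "(p, b) \<in> S" using join_incD[OF inc step(2)] by auto
    moreover have "(x, p) \<in> R \<or> (x, p) \<in> S" "p < x"
      using step(1) by (auto simp: dec_union_def)
    ultimately have "(x, b) \<in> R \<or> (x, b) \<in> S"
      using trans_R trans_S by (meson transD)
    then have "x = b \<or> (x, b) \<in> dec_union R S" using \<open>b \<le> x\<close> by (auto simp: dec_union_def)
    then show ?thesis by auto
  qed
qed

lemma join_inc_absorb_right:
  assumes inc: "join_inc R S a b" and path: "(b, z) \<in> (dec_union R S)\<^sup>*" and "z \<le> a"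
  shows "(a, z) \<in> (dec_union R S)\<^sup>*"
  using path \<open>z \<le> a\<close>
proof (induction rule: rtrancl_induct)
  case base
  then show ?case using join_inc_less[OF inc] by simp
next
  case (step p z)
  show ?case
  proof (cases "p \<le> a")
    case True
    then show ?thesis using step by (meson rtrancl_into_rtrancl)
  next
    case False
    then have "(a, p) \<in> R" "(a, p) \<in> S" using join_incD[OF inc _ step(1)] by auto
    moreover have "(p, z) \<in> R \<or> (p, z) \<in> S" "z < p"
      using step(2) by (auto simp: dec_union_def)
    ultimately have "(a, z) \<in> R \<or> (a, z) \<in> S"
      using trans_R trans_S by (meson transD)
    then have "a = z \<or> (a, z) \<in> dec_union R S" using \<open>z \<le> a\<close> by (auto simp: dec_union_def)
    then show ?thesis by auto
  qed
qed

lemma join_inc_trans: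
  assumes ab: "join_inc R S a b" and bc: "join_inc R S b c"
  shows "join_inc R S a c"
proof -
  have "(x, z) \<in> R \<and> (x, z) \<in> S"
    if xa: "(x, a) \<in> (dec_union R S)\<^sup>*" and cz: "(c, z) \<in> (dec_union R S)\<^sup>*" and "x < z" for x z
  proof -
    consider "z \<le> b" | "b \<le> x" | "x < b" "b < z" by linarith
    then show ?thesis
    proof cases
      case 1
      then have "(b, z) \<in> (dec_union R S)\<^sup>*" using join_inc_absorb_right[OF bc cz] by simp
      then show ?thesis using join_incD[OF ab xa] \<open>x < z\<close> by blast
    next
      case 2
      then have "(x, b) \<in> (dec_union R S)\<^sup>*" using join_inc_absorb_left[OF ab xa] by simp
      then show ?thesis using join_incD[OF bc _ cz] \<open>x < z\<close> by blast
    next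
      case 3
      have "(x, b) \<in> R" "(x, b) \<in> S" using join_incD[OF ab xa _ \<open>x < b\<close>] by auto
      moreover have "(b, z) \<in> R" "(b, z) \<in> S" using join_incD[OF bc _ cz \<open>b < z\<close>] by auto
      ultimately show ?thesis using trans_R trans_S by (meson transD)
    qed
  qed
  moreover have "a < c" using join_inc_less[OF ab] join_inc_less[OF bc] by simp
  ultimately show ?thesis unfolding join_inc_def by blast
qed

end

lemma trancl_dec_union_subset:
  assumes "int_rel n R" "int_rel n S"
  shows "(dec_union R S)\<^sup>+ \<subseteq> {1..n} \<times> {1..n}"
  by (rule trancl_subset_Sigma) (use assms in \<open>auto simp: dec_union_def int_rel_def\<close>)

lemma weak_join_int_rel:
  assumes "int_rel n R" "int_rel n S"
  shows "int_rel n (weak_join n R S)"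
  using trancl_dec_union_subset[OF assms] join_inc_mem assms(1)
  unfolding int_rel_def weak_join_def by fast

lemma weak_join_trans:
  assumes "R \<in> trans_int_rels n" and "S \<in> trans_int_rels n"
  shows "trans (weak_join n R S)"
proof (rule transI)
  have tR: "trans R" and tS: "trans S" and iR: "int_rel n R" and iS: "int_rel n S"
    using assms by (auto simp: trans_int_rels_def)
  let ?D = "dec_union R S"
  have refl_or_dec: "(x, z) \<in> weak_join n R S" if "(x, z) \<in> ?D\<^sup>*" "x \<in> {1..n}" for x z
    using that by (auto simp: weak_join_def rtrancl_eq_or_trancl)
  fix x y z assume xy: "(x, y) \<in> weak_join n R S" and yz: "(y, z) \<in> weak_join n R S"
  consider "x = y" | "y = z" | "(x, y) \<in> ?D\<^sup>+" "(y, z) \<in> ?D\<^sup>+"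
    | "(x, y) \<in> ?D\<^sup>+" "join_inc R S y z" | "join_inc R S x y" "(y, z) \<in> ?D\<^sup>+"
    | "join_inc R S x y" "join_inc R S y z"
    using xy yz unfolding weak_join_def by auto
  then show "(x, z) \<in> weak_join n R S"
  proof cases
    case 3
    then show ?thesis unfolding weak_join_def by (meson UnI1 UnI2 trancl_trans)
  next
    case 4
    show ?thesis
    proof (cases "x < z")
      case True
      then have "join_inc R S x z" using join_inc_rtrancl_left 4 by (meson trancl_into_rtrancl)
      then show ?thesis by (simp add: weak_join_def)
    next
      case False
      then have "(x, z) \<in> ?D\<^sup>*"
        using join_inc_absorb_left[OF tR tS 4(2)] 4(1) by (simp add: trancl_into_rtrancl)
      moreover have "x \<in> {1..n}" using 4(1) trancl_dec_union_subset[OF iR iS] by auto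
      ultimately show ?thesis by (rule refl_or_dec)
    qed
  next
    case 5
    show ?thesis
    proof (cases "x < z")
      case True
      then have "join_inc R S x z" using join_inc_rtrancl_right 5 by (meson trancl_into_rtrancl)
      then show ?thesis by (simp add: weak_join_def)
    next
      case False
      then have "(x, z) \<in> ?D\<^sup>*"
        using join_inc_absorb_right[OF tR tS 5(1)] 5(2) by (simp add: trancl_into_rtrancl)
      moreover have "x \<in> {1..n}" using join_inc_mem[OF 5(1)] iR by (auto simp: int_rel_def)
      ultimately show ?thesis by (rule refl_or_dec)
    qed
  next
    case 6
    then show ?thesis using join_inc_trans[OF tR tS] unfolding weak_join_def by auto
  qed (use xy yz in auto)
qed

lemma weak_join_is_lub:
  assumes R: "R \<in> trans_int_rels n" and S: "S \<in> trans_int_rels n"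
  shows "is_weak_lub (trans_int_rels n) R S (weak_join n R S)"
proof -
  have iR: "int_rel n R" and iS: "int_rel n S" using R S by (auto simp: trans_int_rels_def)
  let ?J = "weak_join n R S" and ?D = "dec_union R S"
  have inc_J: "join_inc R S a b" if "(a, b) \<in> ?J" "a < b" for a b
    using that trancl_dec_union_less[of a b R S] unfolding weak_join_def by auto
  have dec_J: "(b, a) \<in> ?D\<^sup>+" if "(b, a) \<in> ?J" "a < b" for a b
    using that join_inc_less[of R S b a] unfolding weak_join_def by auto
  have J_le: "weak_le X ?J" if "X = R \<or> X = S" for X
    unfolding weak_le_def
  proof
    show "Inc ?J \<subseteq> Inc X"
      using that by (auto simp: Inc_def dest!: inc_J join_inc_mem)
    show "Dec X \<subseteq> Dec ?J"
      using that by (auto simp: Dec_def weak_join_def dec_union_def)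
  qed
  have J_least: "weak_le ?J U" if U: "U \<in> trans_int_rels n" "weak_le R U" "weak_le S U" for U
  proof -
    have tU: "trans U" using U by (simp add: trans_int_rels_def)
    have D_U: "?D \<subseteq> U" using U(2,3) unfolding weak_le_def dec_union_def by auto
    then have trancl_D_U: "?D\<^sup>+ \<subseteq> U"
      using trancl_mono trancl_id[OF tU] by blast
    have inc_U: "(x, z) \<in> R \<and> (x, z) \<in> S" if "(x, z) \<in> U" "x < z" for x z
      using that U(2,3) unfolding weak_le_def by (metis mem_Inc_iff subsetD)
    have "join_inc R S a c" if ac: "(a, c) \<in> U" "a < c" for a c
    proof -
      have "(x, z) \<in> U" if "(x, a) \<in> ?D\<^sup>*" "(c, z) \<in> ?D\<^sup>*" for x z
      proof -
        have "x = a \<or> (x, a) \<in> U" "c = z \<or> (c, z) \<in> U"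
          using that trancl_D_U by (auto simp: rtrancl_eq_or_trancl)
        then show ?thesis using ac(1) tU by (meson transD)
      qed
      then show ?thesis
        using ac(2) inc_U unfolding join_inc_def by blast
    qed
    then have "Inc U \<subseteq> Inc ?J" by (auto simp: Inc_def weak_join_def)
    moreover have "Dec ?J \<subseteq> Dec U"
      using dec_J trancl_D_U by (auto simp: Dec_def)
    ultimately show ?thesis by (simp add: weak_le_def)
  qed
  have "?J \<in> trans_int_rels n"
    using weak_join_int_rel[OF iR iS] weak_join_trans[OF R S] by (simp add: trans_int_rels_def)
  then show ?thesis unfolding is_weak_lub_def using J_le J_least by blast
qed

lemma weak_join_antisym:
  assumes "antisym R" "antisym S"
  shows "antisym (weak_join n R S)"
proof -
  let ?J = "weak_join n R S" and ?D = "dec_union R S"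
  have no_cycle: False if "(x, y) \<in> ?J" "(y, x) \<in> ?J" "x < y" for x y
  proof -
    have inc: "join_inc R S x y" and "(y, x) \<in> ?D\<^sup>+"
      using that trancl_dec_union_less[of x y R S] join_inc_less[of R S y x]
      unfolding weak_join_def by auto
    then obtain p where yp: "(y, p) \<in> ?D\<^sup>*" and px: "(p, x) \<in> ?D"
      by (blast dest: tranclD2)
    have "x < p" using dec_union_less[OF px] .
    then have "(x, p) \<in> R \<and> (x, p) \<in> S" using join_incD[OF inc _ yp] by blast
    moreover have "(p, x) \<in> R \<or> (p, x) \<in> S" using px by (auto simp: dec_union_def)
    ultimately show False using assms \<open>x < p\<close> by (auto dest: antisymD)
  qed
  show ?thesis
    by (rule antisymI) (metis linorder_neqE_nat no_cycle)
qed

definition weak_meet :: "nat \<Rightarrow> (nat \<times> nat) set \<Rightarrow> (nat \<times> nat) set \<Rightarrow> (nat \<times> nat) set" where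
  "weak_meet n R S = (weak_join n (R\<inverse>) (S\<inverse>))\<inverse>"

lemma weak_le_converse [simp]: "weak_le (A\<inverse>) (B\<inverse>) \<longleftrightarrow> weak_le B A"
  unfolding weak_le_def Inc_def Dec_def by auto

lemma int_rel_converse_iff [simp]: "int_rel n (A\<inverse>) \<longleftrightarrow> int_rel n A"
  unfolding int_rel_def by auto

lemma converse_image_trans_int_rels: "converse ` trans_int_rels n = trans_int_rels n"
  unfolding trans_int_rels_def by (force simp: image_iff intro: exI[of _ "converse _"])

lemma converse_image_int_posets: "converse ` int_posets n = int_posets n"
  unfolding int_posets_def by (force simp: image_iff intro: exI[of _ "converse _"])

lemma is_weak_glb_converse:
  assumes "is_weak_lub (converse ` A) (R\<inverse>) (S\<inverse>) J"
  shows "is_weak_glb A R S (J\<inverse>)"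
proof -
  have "weak_le X (J\<inverse>)" if "X \<in> A" "weak_le X R" "weak_le X S" for X
    using assms that weak_le_converse[of J X] unfolding is_weak_lub_def by auto
  moreover have "J\<inverse> \<in> A" "weak_le (J\<inverse>) R" "weak_le (J\<inverse>) S"
    using assms weak_le_converse[of "J\<inverse>"] unfolding is_weak_lub_def by auto
  ultimately show ?thesis unfolding is_weak_glb_def by blast
qed

lemma weak_meet_is_glb:
  assumes "R \<in> trans_int_rels n" and "S \<in> trans_int_rels n"
  shows "is_weak_glb (trans_int_rels n) R S (weak_meet n R S)"
proof -
  have "R\<inverse> \<in> trans_int_rels n" "S\<inverse> \<in> trans_int_rels n"
    using assms by (auto simp: trans_int_rels_def)
  then show ?thesis
    unfolding weak_meet_def using weak_join_is_lub is_weak_glb_converse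
    by (metis converse_image_trans_int_rels)
qed

lemma weak_le_antisym:
  assumes "int_rel n A" "int_rel n B" "weak_le A B" "weak_le B A"
  shows "A = B"
proof (intro set_eqI, clarify)
  fix a b :: nat
  have Inc: "Inc A = Inc B" and Dec: "Dec A = Dec B" using assms(3,4) unfolding weak_le_def by auto
  consider "a < b" | "b < a" | "a = b" by linarith
  then show "(a, b) \<in> A \<longleftrightarrow> (a, b) \<in> B"
  proof cases
    case 1 then show ?thesis using Inc by (metis mem_Inc_iff)
  next
    case 2 then show ?thesis using Dec by (metis mem_Dec_iff)
  next
    case 3 then show ?thesis using assms(1,2) unfolding int_rel_def by auto
  qed
qed

lemma is_weak_lub_unique:
  "A \<subseteq> int_rels n \<Longrightarrow> is_weak_lub A R S J \<Longrightarrow> is_weak_lub A R S J' \<Longrightarrow> J = J'"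
  unfolding is_weak_lub_def int_rels_def using weak_le_antisym by blast

lemma is_weak_glb_unique:
  "A \<subseteq> int_rels n \<Longrightarrow> is_weak_glb A R S M \<Longrightarrow> is_weak_glb A R S M' \<Longrightarrow> M = M'"
  unfolding is_weak_glb_def int_rels_def using weak_le_antisym by blast

lemma int_posets_subset_trans_int_rels: "int_posets n \<subseteq> trans_int_rels n"
  unfolding int_posets_def trans_int_rels_def by auto

lemma trans_int_rels_subset_int_rels: "trans_int_rels n \<subseteq> int_rels n"
  unfolding trans_int_rels_def int_rels_def by auto

lemma weak_join_mem_int_posets:
  assumes "R \<in> int_posets n" and "S \<in> int_posets n"
  shows "weak_join n R S \<in> int_posets n"
proof -
  have "weak_join n R S \<in> trans_int_rels n"
    using assms int_posets_subset_trans_int_rels weak_join_is_lub unfolding is_weak_lub_def by blast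
  then show ?thesis
    using assms weak_join_antisym unfolding int_posets_def trans_int_rels_def by blast
qed

lemma weak_meet_mem_int_posets:
  assumes "R \<in> int_posets n" and "S \<in> int_posets n"
  shows "weak_meet n R S \<in> int_posets n"
proof -
  have "R\<inverse> \<in> int_posets n" "S\<inverse> \<in> int_posets n"
    using assms by (auto simp: int_posets_def)
  then show ?thesis
    unfolding weak_meet_def using weak_join_mem_int_posets
    by (metis converse_image_int_posets image_eqI)
qed

text \<open>
  In all integer relations the meet of Id \<union> {(1, 2)} and Id \<union> {(2, 3)} is their union, which
  is not transitive.
\<close>

lemma trans_int_rels_not_sublattice:
  assumes "3 \<le> n"
  shows "\<not> weak_sublattice (trans_int_rels n) (int_rels n)"
proof
  assume sublattice: "weak_sublattice (trans_int_rels n) (int_rels n)"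
  define R where "R = Id_on {1..n} \<union> {(1, 2)}"
  define S where "S = Id_on {1..n} \<union> {(2, 3)}"
  have "R \<in> trans_int_rels n" "S \<in> trans_int_rels n"
    using assms unfolding R_def S_def trans_int_rels_def int_rel_def trans_def by auto
  moreover have "is_weak_glb (int_rels n) R S (R \<union> S)"
    unfolding is_weak_glb_def
  proof (intro conjI ballI impI)
    have no_dec: "Dec R = {}" "Dec S = {}" unfolding R_def S_def Dec_def by auto
    then have "Dec (R \<union> S) = {}" by (auto simp: Dec_def)
    moreover have "Inc (R \<union> S) = Inc R \<union> Inc S" by (auto simp: Inc_def)
    ultimately show "weak_le (R \<union> S) R" "weak_le (R \<union> S) S"
      "\<And>X. weak_le X R \<and> weak_le X S \<Longrightarrow> weak_le X (R \<union> S)"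
      using no_dec unfolding weak_le_def by auto
    show "R \<union> S \<in> int_rels n"
      using assms unfolding R_def S_def int_rels_def int_rel_def by auto
  qed
  ultimately have "trans (R \<union> S)"
    using sublattice unfolding weak_sublattice_def trans_int_rels_def by blast
  moreover have "(1, 2) \<in> R \<union> S" "(2, 3) \<in> R \<union> S" "(1, 3) \<notin> R \<union> S"
    unfolding R_def S_def by auto
  ultimately show False by (meson transD)
qed

theorem mainTheorem5:
  fixes n :: nat
  assumes "n \<ge> 1"
  shows "weak_lattice (trans_int_rels n)
    \<and> (n \<ge> 3 \<longrightarrow> \<not> weak_sublattice (trans_int_rels n) (int_rels n))
    \<and> weak_sublattice (int_posets n) (trans_int_rels n)"
proof (intro conjI impI)
  show "weak_lattice (trans_int_rels n)"
    unfolding weak_lattice_def using weak_meet_is_glb weak_join_is_lub by blast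
  show "\<not> weak_sublattice (trans_int_rels n) (int_rels n)" if "n \<ge> 3"
    using that by (rule trans_int_rels_not_sublattice)
  note T_int_rels = trans_int_rels_subset_int_rels
  note P_T = int_posets_subset_trans_int_rels
  show "weak_sublattice (int_posets n) (trans_int_rels n)"
    unfolding weak_sublattice_def
  proof (intro conjI ballI allI impI P_T)
    fix R S M assume "R \<in> int_posets n" "S \<in> int_posets n" "is_weak_glb (trans_int_rels n) R S M"
    then show "M \<in> int_posets n"
      using is_weak_glb_unique[OF T_int_rels] weak_meet_is_glb weak_meet_mem_int_posets P_T by blast
  next
    fix R S J assume "R \<in> int_posets n" "S \<in> int_posets n" "is_weak_lub (trans_int_rels n) R S J"
    then show "J \<in> int_posets n"
      using is_weak_lub_unique[OF T_int_rels] weak_join_is_lub weak_join_mem_int_posets P_T by blast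
  qed
qed

end
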